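(* Let $\vec\lambda,\vec\mu\in\mathcal P_{m,\ell}$ with $\|\vec\lambda\|=\|\vec\mu\|$. Fix $\lambda\in\mathfrak S\cdot\vec\lambda^{\mathtt{tot}}$, where $\mathfrak S=(\mathfrak S_n)^{\ell}\subset\mathfrak S_{n\ell}$ (the $k$-th factor permuting the indices $(k-1)n+1,\dots,kn$) acts on $\mathbb Z^{n\ell}$ by permuting coordinates. If $\vec\mu^{\mathtt{tot}}\in\lambda+\mathbb Z^{n\ell}_+$, then $\vec\mu\unlhd\vec\lambda$.
   Context: Fix integers $\ell>1$, $n\ge m\ge1$. Partitions have at most $n$ parts, written $\lambda=(\lambda_1\ge\dots\ge\lambda_n\ge0)$; the dominance order on partitions of $m$ is $\lambda\le\mu$ iff $\sum_{j\le k}\lambda_j\le\sum_{j\le k}\mu_j$ for all $k$. An $\ell$-partition of $m$ is $\vec\lambda=(\lambda^{(1)},\dots,\lambda^{(\ell)})$ with $\sum_k|\lambda^{(k)}|=m$; $\mathcal P_{m,\ell}$ denotes the set of these. Define $\vec\lambda^{\mathtt{tot}}\in\mathbb Z_{\ge0}^{n\ell}$ as the concatenation $(\lambda^{(1)}_n,\lambda^{(1)}_{n-1},\dots,\lambda^{(1)}_1,\lambda^{(2)}_n,\dots,\lambda^{(2)}_1,\dots,\lambda^{(\ell)}_n,\dots,\lambda^{(\ell)}_1)$, and $\|\vec\lambda\|$ as the partition of $m$ obtained by sorting all parts of all $\lambda^{(k)}$. With $\{\varepsilon_i\}$ the standard basis of $\mathbb Z^{n\ell}$, let $\mathbb Z^{n\ell}_+=\big(\sum_{1\le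 i<j\le n\ell}\mathbb Z_{\ge0}(\varepsilon_i-\varepsilon_j)\big)\setminus\{0\}$. Define $\vec\lambda\lhd\vec\mu$ iff either $\|\vec\lambda\|<\|\vec\mu\|$ (strictly in dominance), or $\|\vec\lambda\|=\|\vec\mu\|$ and $\vec\lambda^{\mathtt{tot}}-\vec\mu^{\mathtt{tot}}\in\mathbb Z^{n\ell}_+$; $\unlhd$ means $\lhd$ or $=$. *)

theory Defs
  imports "HOL-Combinatorics.Permutations"
begin

text \<open>An l-multipartition is encoded as L :: nat => nat => nat, where
  L k i is the (i+1)-th part of the (k+1)-th component (0-indexed), for k < l, i < n;
  all other values are 0.\<close>
definition is_multipart :: "nat \<Rightarrow> nat \<Rightarrow> nat \<Rightarrow> (nat \<Rightarrow> nat \<Rightarrow> nat) \<Rightarrow> bool" where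
  "is_multipart n l m L \<longleftrightarrow>
     (\<forall>k i. (k \<ge> l \<or> i \<ge> n) \<longrightarrow> L k i = 0) \<and>
     (\<forall>k i j. i \<le> j \<longrightarrow> L k j \<le> L k i) \<and>
     (\<Sum>k<l. \<Sum>i<n. L k i) = m"

text \<open>The vector tot in Z^(n l), 0-indexed: position k*n + j holds the (n-j)-th part
  (1-indexed) of the (k+1)-th component; zero outside {..<n*l}.\<close>
definition tot :: "nat \<Rightarrow> nat \<Rightarrow> (nat \<Rightarrow> nat \<Rightarrow> nat) \<Rightarrow> nat \<Rightarrow> int" where
  "tot n l L i = (if i < n * l then int (L (i div n) (n - 1 - i mod n)) else 0)"

definition mp_norm :: "nat \<Rightarrow> nat \<Rightarrow> (nat \<Rightarrow> nat \<Rightarrow> nat) \<Rightarrow> nat list" where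
  "mp_norm n l L = rev (sort (map (\<lambda>i. L (i div n) (i mod n)) [0..<n * l]))"

definition dom_le :: "nat list \<Rightarrow> nat list \<Rightarrow> bool" where
  "dom_le a b \<longleftrightarrow> (\<forall>k. sum_list (take k a) \<le> sum_list (take k b))"

definition dom_lt :: "nat list \<Rightarrow> nat list \<Rightarrow> bool" where
  "dom_lt a b \<longleftrightarrow> dom_le a b \<and> a \<noteq> b"

text \<open>Z^N_+ : nonzero elements of the cone spanned by e_a - e_b, a < b < N.\<close>
definition Zplus :: "nat \<Rightarrow> (nat \<Rightarrow> int) \<Rightarrow> bool" where
  "Zplus N v \<longleftrightarrow> v \<noteq> (\<lambda>_. 0) \<and>
     (\<exists>c :: nat \<Rightarrow> nat \<Rightarrow> int. (\<forall>a b. 0 \<le> c a b) \<and>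
        v = (\<lambda>i. \<Sum>a<N. \<Sum>b<N. if a < b then
               c a b * ((if i = a then 1 else 0) - (if i = b then 1 else 0)) else 0))"

definition mp_less :: "nat \<Rightarrow> nat \<Rightarrow> (nat \<Rightarrow> nat \<Rightarrow> nat) \<Rightarrow> (nat \<Rightarrow> nat \<Rightarrow> nat) \<Rightarrow> bool" where
  "mp_less n l L M \<longleftrightarrow> dom_lt (mp_norm n l L) (mp_norm n l M) \<or>
     (mp_norm n l L = mp_norm n l M \<and> Zplus (n * l) (\<lambda>i. tot n l L i - tot n l M i))"

definition mp_le :: "nat \<Rightarrow> nat \<Rightarrow> (nat \<Rightarrow> nat \<Rightarrow> nat) \<Rightarrow> (nat \<Rightarrow> nat \<Rightarrow> nat) \<Rightarrow> bool" where
  "mp_le n l L M \<longleftrightarrow> mp_less n l L M \<or> L = M"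

end

theory Submission imports Defs begin

text \<open>A vector lies in the cone of positive roots \<open>e\<^sub>a - e\<^sub>b\<close> (\<open>a < b\<close>) iff all its prefix
  sums are nonnegative and its total sum vanishes: with \<open>S k\<close> the \<open>k\<close>-th prefix sum, \<open>v\<close> is the
  combination of the simple roots \<open>e\<^sub>a - e\<^sub>a\<^sub>+\<^sub>1\<close> with coefficients \<open>S (a + 1)\<close>.
  Since each component of a multipartition enters \<open>tot\<close> in increasing order, and a prefix of the
  index range meets at most one block partially, a block-preserving permutation of \<open>tot \<lambda>\<close> can
  only raise its prefix sums. Hence the prefix sums of \<open>tot \<mu> - tot \<lambda>\<close> dominate those of
  \<open>tot \<mu> - \<sigma>\<cdot>tot \<lambda>\<close>, so \<open>tot \<mu> - tot \<lambda>\<close> is in the cone unless it is zero, i.e. \<open>\<mu> = \<lambda>\<close>.\<close>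

definition pos_root_comb :: "nat \<Rightarrow> (nat \<Rightarrow> nat \<Rightarrow> int) \<Rightarrow> nat \<Rightarrow> int" where
  "pos_root_comb N c i = (\<Sum>a<N. \<Sum>b<N. if a < b then
     c a b * ((if i = a then 1 else 0) - (if i = b then 1 else 0)) else 0)"

lemma Zplus_iff_pos_root_comb:
  "Zplus N v \<longleftrightarrow> v \<noteq> (\<lambda>_. 0) \<and> (\<exists>c. (\<forall>a b. 0 \<le> c a b) \<and> v = pos_root_comb N c)"
  unfolding Zplus_def pos_root_comb_def[abs_def] by simp

lemma pos_root_comb_eq_0: "N \<le> i \<Longrightarrow> pos_root_comb N c i = 0"
  unfolding pos_root_comb_def by (intro sum.neutral ballI) auto

lemma sum_lessThan_pos_root_comb:
  "(\<Sum>i<K. pos_root_comb N c i) = (\<Sum>a<N. \<Sum>b<N. if a < b then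
     c a b * ((if a < K then 1 else 0) - (if b < K then 1 else 0)) else 0)"
proof -
  have "(\<Sum>i<K. pos_root_comb N c i) = (\<Sum>a<N. \<Sum>b<N. \<Sum>i<K. if a < b then
     c a b * ((if i = a then 1 else 0) - (if i = b then 1 else 0)) else 0)"
    unfolding pos_root_comb_def by (simp add: sum.swap[of _ "{..<K}"])
  also have "\<dots> = (\<Sum>a<N. \<Sum>b<N. if a < b then
     c a b * ((if a < K then 1 else 0) - (if b < K then 1 else 0)) else 0)"
    by (intro sum.cong refl) (auto simp: sum_subtractf sum_distrib_left[symmetric])
  finally show ?thesis .
qed

lemma pos_root_comb_simple_roots:
  "pos_root_comb N (\<lambda>a b. if b = Suc a then d a else 0) i =
     (if Suc i < N then d i else 0) - (if 0 < i \<and> i < N then d (i - 1) else 0)"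
proof -
  have inner: "(\<Sum>b<N. if a < b then (if b = Suc a then d a else 0) *
      ((if i = a then 1 else 0) - (if i = b then 1 else 0)) else 0)
    = (if Suc a < N then d a * ((if i = a then 1 else 0) - (if i = Suc a then 1 else 0)) else 0)"
    for a
  proof -
    have "(\<Sum>b<N. if a < b then (if b = Suc a then d a else 0) *
        ((if i = a then 1 else 0) - (if i = b then 1 else 0)) else 0)
      = (\<Sum>b<N. if b = Suc a then d a * ((if i = a then 1 else 0) - (if i = Suc a then 1 else 0))
          else 0)"
      by (intro sum.cong) auto
    then show ?thesis by simp
  qed
  have "pos_root_comb N (\<lambda>a b. if b = Suc a then d a else 0) i =
     (\<Sum>a<N. if Suc a < N \<and> a = i then d a else 0) -
     (\<Sum>a<N. if Suc a < N \<and> Suc a = i then d a else 0)"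
    unfolding pos_root_comb_def inner sum_subtractf[symmetric] by (intro sum.cong) auto
  moreover have "(\<Sum>a<N. if Suc a < N \<and> a = i then d a else 0) =
      (\<Sum>a<N. if a = i then (if Suc i < N then d i else 0) else 0)"
    by (intro sum.cong) auto
  moreover have "(\<Sum>a<N. if Suc a < N \<and> Suc a = i then d a else 0) =
      (\<Sum>a<N. if a = i - 1 then (if 0 < i \<and> i < N then d (i - 1) else 0) else 0)"
    by (intro sum.cong) auto
  ultimately show ?thesis by auto
qed

lemma Zplus_iff_prefix_sums:
  "Zplus N v \<longleftrightarrow> v \<noteq> (\<lambda>_. 0) \<and> (\<forall>i\<ge>N. v i = 0) \<and>
     (\<forall>k. 0 \<le> (\<Sum>i<k. v i)) \<and> (\<Sum>i<N. v i) = 0"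
proof
  assume "Zplus N v"
  then obtain c where "v \<noteq> (\<lambda>_. 0)" and c: "\<forall>a b. 0 \<le> c a b" "v = pos_root_comb N c"
    unfolding Zplus_iff_pos_root_comb by blast
  moreover have "\<forall>i\<ge>N. v i = 0" using c by (simp add: pos_root_comb_eq_0)
  moreover have "0 \<le> (\<Sum>i<k. v i)" for k
    unfolding c(2) sum_lessThan_pos_root_comb by (intro sum_nonneg) (auto simp: c(1))
  moreover have "(\<Sum>i<N. v i) = 0"
    unfolding c(2) sum_lessThan_pos_root_comb by (intro sum.neutral ballI) auto
  ultimately show "v \<noteq> (\<lambda>_. 0) \<and> (\<forall>i\<ge>N. v i = 0) \<and>
     (\<forall>k. 0 \<le> (\<Sum>i<k. v i)) \<and> (\<Sum>i<N. v i) = 0" by blast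
next
  assume "v \<noteq> (\<lambda>_. 0) \<and> (\<forall>i\<ge>N. v i = 0) \<and> (\<forall>k. 0 \<le> (\<Sum>i<k. v i)) \<and> (\<Sum>i<N. v i) = 0"
  then have nonzero: "v \<noteq> (\<lambda>_. 0)" and outside: "\<forall>i\<ge>N. v i = 0"
    and prefix: "\<forall>k. 0 \<le> (\<Sum>i<k. v i)" and total: "(\<Sum>i<N. v i) = 0" by blast+
  define c where "c a b = (if b = Suc a then (\<Sum>i<Suc a. v i) else 0)" for a b
  have "v i = pos_root_comb N c i" for i
  proof (cases "i < N")
    case True
    then have "Suc i < N \<or> Suc i = N" by linarith
    then show ?thesis
      unfolding c_def pos_root_comb_simple_roots using total by (cases i) auto
  qed (simp add: outside pos_root_comb_eq_0)
  moreover have "\<forall>a b. 0 \<le> c a b" using prefix unfolding c_def by (simp del: sum.lessThan_Suc)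
  ultimately show "Zplus N v" unfolding Zplus_iff_pos_root_comb using nonzero by blast
qed

lemma sum_le_sum_if_dominated:
  fixes f :: "'a \<Rightarrow> 'b::linordered_idom"
  assumes "finite X" "finite Y" "card X = card Y" "\<forall>x\<in>X. \<forall>y\<in>Y. f y \<le> f x"
  shows "sum f Y \<le> sum f X"
proof (cases "X = {}")
  case False
  define t where "t = Min (f ` X)"
  have "t \<in> f ` X" using False assms(1) unfolding t_def by (intro Min_in) auto
  then have "\<forall>y\<in>Y. f y \<le> t" using assms(4) by auto
  then have "sum f Y \<le> of_nat (card Y) * t" using sum_bounded_above[of Y f t] by auto
  also have "\<dots> = of_nat (card X) * t" using assms(3) by simp
  also have "\<dots> \<le> sum f X" using sum_bounded_below[of X t f] assms(1) by (auto simp: t_def)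
  finally show ?thesis .
qed (use assms in simp)

lemma sum_lessThan_le_permuted_blockwise:
  fixes T :: "nat \<Rightarrow> 'b::linordered_idom"
  assumes "bij \<sigma>" and blocks: "\<forall>i. \<sigma> i div n = i div n"
    and mono: "\<forall>x y. y < x \<longrightarrow> y div n = x div n \<longrightarrow> T y \<le> T x"
  shows "(\<Sum>i<k. T i) \<le> (\<Sum>i<k. T (\<sigma> i))"
proof -
  define A where "A = \<sigma> ` {..<k}"
  have inj: "inj \<sigma>" using \<open>bij \<sigma>\<close> by (rule bij_is_inj)
  have sum_A: "(\<Sum>i<k. T (\<sigma> i)) = sum T A"
    unfolding A_def by (subst sum.reindex) (auto intro: inj_on_subset[OF inj])
  have "card A = card {..<k}"
    unfolding A_def by (rule card_image) (auto intro: inj_on_subset[OF inj])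
  then have card_diff: "card (A - {..<k}) = card ({..<k} - A)"
    by (simp add: card_Diff_subset_Int A_def Int_commute)
  have dominated: "\<forall>x\<in>A - {..<k}. \<forall>y\<in>{..<k} - A. T y \<le> T x"
  proof (intro ballI)
    fix x y assume x: "x \<in> A - {..<k}" and y: "y \<in> {..<k} - A"
    obtain i where i: "i < k" "x = \<sigma> i" using x by (auto simp: A_def)
    obtain j where j: "y = \<sigma> j" using \<open>bij \<sigma>\<close> by (metis bij_pointE)
    have "k \<le> j" using y j by (auto simp: A_def)
    have "y < x" using x y by auto
    moreover have "y div n = x div n"
    proof (rule order_antisym)
      show "y div n \<le> x div n" using \<open>y < x\<close> by (simp add: div_le_mono)
      have "i div n \<le> j div n" using i \<open>k \<le> j\<close> by (simp add: div_le_mono)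
      then show "x div n \<le> y div n" using blocks i j by simp
    qed
    ultimately show "T y \<le> T x" using mono by blast
  qed
  have "(\<Sum>i<k. T i) = sum T (A \<inter> {..<k}) + sum T ({..<k} - A)"
    by (metis Int_commute finite_lessThan sum.Int_Diff)
  also have "\<dots> \<le> sum T (A \<inter> {..<k}) + sum T (A - {..<k})"
    using sum_le_sum_if_dominated[OF _ _ card_diff dominated] by (simp add: A_def)
  also have "\<dots> = sum T A" by (metis A_def finite_imageI finite_lessThan sum.Int_Diff)
  finally show ?thesis using sum_A by simp
qed

lemma tot_mono_blockwise:
  assumes "is_multipart n l m L" "y < x" "y div n = x div n"
  shows "tot n l L y \<le> tot n l L x"
proof -
  have "y mod n \<le> x mod n"
    using assms(2,3) by (metis add_le_cancel_left div_mult_mod_eq less_imp_le)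
  then have "L (x div n) (n - 1 - y mod n) \<le> L (x div n) (n - 1 - x mod n)"
    using assms(1) unfolding is_multipart_def by (meson diff_le_mono2)
  moreover have "y < n * l \<longleftrightarrow> x < n * l"
  proof (cases "n = 0")
    case False
    then show ?thesis using assms(3) by (metis div_less_iff_less_mult mult.commute not_gr_zero)
  qed simp
  ultimately show ?thesis using assms(3) by (auto simp: tot_def)
qed

lemma tot_eq_imp_eq:
  assumes "is_multipart n l m L" "is_multipart n l m' M" "tot n l L = tot n l M"
  shows "L = M"
proof (intro ext)
  fix k i
  show "L k i = M k i"
  proof (cases "k < l \<and> i < n")
    case True
    define x where "x = (n - 1 - i) + k * n"
    have "n - 1 - i < n" using True by simp
    then have "x div n = k" "x mod n = n - 1 - i" by (simp_all add: x_def)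
    moreover have "x < n * l"
    proof -
      have "x < Suc k * n" using True by (simp add: x_def)
      also have "\<dots> \<le> n * l" using True mult_le_mono1[of "Suc k" l n] by (simp add: mult.commute)
      finally show ?thesis .
    qed
    moreover have "tot n l L x = tot n l M x" using assms(3) by simp
    ultimately show ?thesis using True by (simp add: tot_def)
  qed (use assms(1,2) in \<open>auto simp: is_multipart_def\<close>)
qed

theorem lemma1p3:
  fixes n l m :: nat and La Mu :: "nat \<Rightarrow> nat \<Rightarrow> nat" and \<sigma> :: "nat \<Rightarrow> nat"
  assumes "l > 1" and "1 \<le> m" and "m \<le> n"
    and "is_multipart n l m La" and "is_multipart n l m Mu"
    and "mp_norm n l La = mp_norm n l Mu"
    and "\<sigma> permutes {..<n * l}" and "\<forall>i < n * l. \<sigma> i div n = i div n"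
    and "Zplus (n * l) (\<lambda>i. tot n l Mu i - tot n l La (\<sigma> i))"
  shows "mp_le n l Mu La"
proof -
  define v where "v i = tot n l Mu i - tot n l La i" for i
  have blocks: "\<forall>i. \<sigma> i div n = i div n"
    using assms(7,8) by (metis lessThan_iff permutes_not_in)
  have shifted: "\<forall>k. 0 \<le> (\<Sum>i<k. tot n l Mu i - tot n l La (\<sigma> i))"
    "(\<Sum>i<n * l. tot n l Mu i - tot n l La (\<sigma> i)) = 0"
    using assms(9) unfolding Zplus_iff_prefix_sums by blast+
  have "0 \<le> (\<Sum>i<k. v i)" for k
  proof -
    have "(\<Sum>i<k. tot n l La i) \<le> (\<Sum>i<k. tot n l La (\<sigma> i))"
      using permutes_bij[OF assms(7)] blocks tot_mono_blockwise[OF assms(4)]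
      by (intro sum_lessThan_le_permuted_blockwise) auto
    then show ?thesis using shifted(1)[rule_format, of k] unfolding v_def sum_subtractf by linarith
  qed
  moreover have "(\<Sum>i<n * l. v i) = 0"
    using shifted(2) sum.permute[OF assms(7), of "tot n l La"] by (simp add: v_def sum_subtractf comp_def)
  moreover have "\<forall>i\<ge>n * l. v i = 0" by (simp add: v_def tot_def)
  ultimately have "v \<noteq> (\<lambda>_. 0) \<longrightarrow> Zplus (n * l) v" unfolding Zplus_iff_prefix_sums by blast
  moreover have "v = (\<lambda>_. 0) \<longrightarrow> Mu = La"
    using tot_eq_imp_eq[OF assms(5,4)] by (auto simp: v_def fun_eq_iff)
  ultimately show ?thesis using assms(6) unfolding mp_le_def mp_less_def v_def by auto
qed

end
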